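(* Let $n,p\ge 1$, let $\mathbf{X}\in\mathbb{R}^{n\times p}$ be a fixed (deterministic) design matrix, $\beta^0\in\mathbb{R}^p$, and $\mathbf{Y}=\mathbf{X}\beta^0+\varepsilon$, where $\varepsilon_1,\ldots,\varepsilon_n$ are i.i.d. with $\mathbb{E}[\varepsilon_i]=0$ and $\mathrm{Var}(\varepsilon_i)=\sigma^2<\infty$. Let $\lambda>0$ and let $\hat\beta=\hat\beta(\lambda)=(\hat\Sigma+\lambda I_p)^{-1}n^{-1}\mathbf{X}^T\mathbf{Y}$ be the Ridge estimator. Assume $\Omega_{\min}(\lambda)>0$. Then $$\max_{j\in\{1,\ldots,p\}}\big|\mathbb{E}[\hat\beta_j]-\theta^0_j\big|\le \lambda\,\|\theta^0\|_2\,\lambda_{\min\neq 0}(\hat\Sigma)^{-1},\qquad \min_{j\in\{1,\ldots,p\}}\mathrm{Var}(\hat\beta_j)\ge n^{-1}\sigma^2\,\Omega_{\min}(\lambda).$$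
   Context: $\hat\Sigma=n^{-1}\mathbf{X}^T\mathbf{X}$. $P_{\mathbf{X}}=\mathbf{X}^T(\mathbf{X}\mathbf{X}^T)^{-}\mathbf{X}$, where $A^{-}$ is the Moore–Penrose pseudo-inverse; $P_{\mathbf{X}}$ is the orthogonal projection of $\mathbb{R}^p$ onto the row space of $\mathbf{X}$. $\theta^0=P_{\mathbf{X}}\beta^0$. $\Omega(\lambda)=(\hat\Sigma+\lambda I_p)^{-1}\hat\Sigma(\hat\Sigma+\lambda I_p)^{-1}$ and $\Omega_{\min}(\lambda)=\min_{1\le j\le p}\Omega_{jj}(\lambda)$. For a symmetric matrix $A$, $\lambda_{\min\neq0}(A)$ denotes its smallest nonzero eigenvalue. *)

theory Defs
  imports "HOL-Probability.Probability"
begin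

definition pinv :: "real^'n^'m \<Rightarrow> real^'m^'n" where
  "pinv A = (THE B. A ** B ** A = A \<and> B ** A ** B = B \<and>
                    transpose (A ** B) = A ** B \<and> transpose (B ** A) = B ** A)"

definition Sigma_hat :: "real^'p^'n \<Rightarrow> real^'p^'p" where
  "Sigma_hat X = (1 / real CARD('n)) *\<^sub>R (transpose X ** X)"

definition proj_X :: "real^'p^'n \<Rightarrow> real^'p^'p" where
  "proj_X X = transpose X ** pinv (X ** transpose X) ** X"

definition theta0 :: "real^'p^'n \<Rightarrow> real^'p \<Rightarrow> real^'p" where
  "theta0 X \<beta>0 = proj_X X *v \<beta>0"

definition ridge :: "real^'p^'n \<Rightarrow> real \<Rightarrow> real^'n \<Rightarrow> real^'p" where
  "ridge X lam Y = matrix_inv (Sigma_hat X + lam *\<^sub>R mat 1) *v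
                    ((1 / real CARD('n)) *\<^sub>R (transpose X *v Y))"

definition Omega :: "real^'p^'n \<Rightarrow> real \<Rightarrow> real^'p^'p" where
  "Omega X lam = matrix_inv (Sigma_hat X + lam *\<^sub>R mat 1) ** Sigma_hat X **
                matrix_inv (Sigma_hat X + lam *\<^sub>R mat 1)"

definition Omega_min :: "real^'p^'n \<Rightarrow> real \<Rightarrow> real" where
  "Omega_min X lam = Min (range (\<lambda>j. Omega X lam $ j $ j))"

definition is_eigenvalue :: "real^'p^'p \<Rightarrow> real \<Rightarrow> bool" where
  "is_eigenvalue A \<mu> \<longleftrightarrow> (\<exists>v. v \<noteq> 0 \<and> A *v v = \<mu> *\<^sub>R v)"

definition lambda_min_nz :: "real^'p^'p \<Rightarrow> real" where
  "lambda_min_nz A = Min {\<mu>. \<mu> \<noteq> 0 \<and> is_eigenvalue A \<mu>}"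

end

theory Submission
  imports Defs
begin

text \<open>Write \<open>K = (\<Sigma> + \<lambda>I)\<^sup>-\<^sup>1 n\<^sup>-\<^sup>1 X\<^sup>T\<close>, so that \<open>\<beta>hat = K X \<beta>\<^sup>0 + K \<epsilon>\<close>. Since \<open>\<theta>\<^sup>0\<close> is the
  projection of \<open>\<beta>\<^sup>0\<close> onto the row space of \<open>X\<close>, \<open>X \<theta>\<^sup>0 = X \<beta>\<^sup>0\<close> and hence
  \<open>E \<beta>hat = (\<Sigma> + \<lambda>I)\<^sup>-\<^sup>1 \<Sigma> \<theta>\<^sup>0 = \<theta>\<^sup>0 - \<lambda> u\<close> with \<open>u = (\<Sigma> + \<lambda>I)\<^sup>-\<^sup>1 \<theta>\<^sup>0\<close>. The vector \<open>u\<close> again lies in the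
  row space, where a Rayleigh-quotient argument gives \<open>\<Sigma> \<ge> \<lambda>\<^sub>m\<^sub>i\<^sub>n\<^sub>\<noteq>\<^sub>0(\<Sigma>)\<close>; thus
  \<open>\<lambda>\<^sub>m\<^sub>i\<^sub>n\<^sub>\<noteq>\<^sub>0 \<parallel>u\<parallel>\<^sup>2 \<le> u\<^sup>T(\<Sigma> + \<lambda>I)u = u\<^sup>T\<theta>\<^sup>0 \<le> \<parallel>u\<parallel> \<parallel>\<theta>\<^sup>0\<parallel>\<close>, which bounds the bias.
  The noise components are uncorrelated with common variance \<open>\<sigma>\<^sup>2\<close>, so
  \<open>Var \<beta>hat\<^sub>j = \<sigma>\<^sup>2 (K K\<^sup>T)\<^sub>j\<^sub>j = \<sigma>\<^sup>2 \<Omega>\<^sub>j\<^sub>j(\<lambda>) / n\<close>.\<close>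

lemma matrix_add_rdistrib: "((A::'a::semiring_1^'n^'m) + B) ** C = A ** C + B ** C"
  by (simp add: matrix_matrix_mult_def vec_eq_iff algebra_simps sum.distrib)

lemma matrix_diff_ldistrib: "(C::'a::ring_1^'n^'m) ** (A - B) = C ** A - C ** B"
  by (simp add: matrix_matrix_mult_def vec_eq_iff algebra_simps sum_subtractf)

lemma matrix_diff_rdistrib: "((A::'a::ring_1^'n^'m) - B) ** C = A ** C - B ** C"
  by (simp add: matrix_matrix_mult_def vec_eq_iff algebra_simps sum_subtractf)

lemma transpose_add: "transpose ((A::'a::semiring_1^'n^'m) + B) = transpose A + transpose B"
  by (simp add: transpose_def vec_eq_iff)

lemma transpose_diff: "transpose ((A::'a::ring_1^'n^'m) - B) = transpose A - transpose B"
  by (simp add: transpose_def vec_eq_iff)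

lemma transpose_zero [simp]: "transpose (0::'a::semiring_1^'n^'m) = 0"
  by (simp add: transpose_def vec_eq_iff)

lemma inner_matrix_vector_mult: "(x::real^'m) \<bullet> ((M::real^'n^'m) *v y) = (transpose M *v x) \<bullet> y"
  by (metis dot_lmul_matrix transpose_matrix_vector)

lemma inner_symmetric_matrix_vector_mult:
  fixes S :: "real^'n^'n"
  assumes "transpose S = S"
  shows "x \<bullet> (S *v y) = (S *v x) \<bullet> y"
  using inner_matrix_vector_mult[of x S y] assms by simp

lemma matrix_mul_transpose_eq_0:
  fixes M :: "real^'n^'m"
  assumes "M ** transpose M = 0"
  shows "M = 0"
proof -
  have "row i M \<bullet> row i M = 0" for i
    using arg_cong[OF assms, of "\<lambda>Z. Z $ i $ i"] by (simp add: matrix_mult_transpose_dot_row)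
  then show ?thesis by (simp add: vec_eq_iff row_def)
qed

lemma
  fixes A :: "real^'n^'n"
  assumes "invertible A"
  shows matrix_inv_right: "A ** matrix_inv A = mat 1"
    and matrix_inv_left: "matrix_inv A ** A = mat 1"
  using someI_ex[OF assms[unfolded invertible_def]] unfolding matrix_inv_def by auto

lemma transpose_matrix_inv_symmetric:
  fixes A :: "real^'n^'n"
  assumes "invertible A" and "transpose A = A"
  shows "transpose (matrix_inv A) = matrix_inv A"
proof -
  have left_inverse: "transpose (matrix_inv A) ** A = mat 1"
    using arg_cong[OF matrix_inv_right[OF assms(1)], of transpose]
    by (simp add: matrix_transpose_mul assms(2))
  have "transpose (matrix_inv A) = transpose (matrix_inv A) ** (A ** matrix_inv A)"
    by (simp add: matrix_inv_right[OF assms(1)])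
  also have "\<dots> = matrix_inv A"
    by (simp add: matrix_mul_assoc left_inverse)
  finally show ?thesis .
qed

definition penrose :: "'a::semiring_1^'n^'m \<Rightarrow> 'a^'m^'n \<Rightarrow> bool" where
  "penrose A B \<longleftrightarrow> A ** B ** A = A \<and> B ** A ** B = B \<and>
                    transpose (A ** B) = A ** B \<and> transpose (B ** A) = B ** A"

lemma penrose_unique:
  fixes A :: "'a::comm_semiring_1^'n^'m"
  assumes "penrose A B1" and "penrose A B2"
  shows "B1 = B2"
proof -
  from assms have a1: "A ** B1 ** A = A" "B1 ** A ** B1 = B1" "transpose (A ** B1) = A ** B1"
    "transpose (B1 ** A) = B1 ** A"
    and a2: "A ** B2 ** A = A" "B2 ** A ** B2 = B2" "transpose (A ** B2) = A ** B2"
    "transpose (B2 ** A) = B2 ** A" by (auto simp: penrose_def)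
  have "B1 = B1 ** transpose (A ** B1)" using a1 by (simp add: matrix_mul_assoc)
  also have "\<dots> = B1 ** transpose B1 ** transpose (A ** B2 ** A)"
    using a2 by (simp add: matrix_transpose_mul matrix_mul_assoc)
  also have "\<dots> = B1 ** (transpose (A ** B1) ** transpose (A ** B2))"
    by (simp add: matrix_transpose_mul matrix_mul_assoc)
  also have "\<dots> = B1 ** A ** B2" using a1 a2 by (metis matrix_mul_assoc)
  finally have B1: "B1 = B1 ** A ** B2" .
  have "B2 = transpose (B2 ** A) ** B2" using a2 by simp
  also have "\<dots> = transpose (A ** B1 ** A) ** transpose B2 ** B2"
    using a1 by (simp add: matrix_transpose_mul)
  also have "\<dots> = transpose (B1 ** A) ** transpose (B2 ** A) ** B2"
    by (simp add: matrix_transpose_mul matrix_mul_assoc)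
  also have "\<dots> = B1 ** A ** B2" using a1 a2 by (metis matrix_mul_assoc)
  finally show ?thesis using B1 by simp
qed

lemma orthogonal_projection_matrix_exists:
  fixes N :: "(real^'n) set"
  assumes "subspace N"
  obtains Q :: "real^'n^'n"
  where "transpose Q = Q" and "\<And>x. Q *v x \<in> N" and "\<And>x. x \<in> N \<Longrightarrow> Q *v x = x"
proof -
  obtain E where orth: "pairwise orthogonal E" and unit: "\<And>e. e \<in> E \<Longrightarrow> norm e = 1"
    and "independent E" and span_E: "span E = N"
    using orthonormal_basis_subspace[OF assms] by metis
  then have "finite E" using independent_imp_finite by blast
  define Q :: "real^'n^'n" where "Q = (\<chi> i j. \<Sum>e\<in>E. e$i * e$j)"
  have Q_mult: "Q *v x = (\<Sum>e\<in>E. (e \<bullet> x) *\<^sub>R e)" for x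
    unfolding Q_def
    by (simp add: vec_eq_iff matrix_vector_mult_def inner_vec_def sum_component
        sum_distrib_left sum_distrib_right mult.commute mult.left_commute)
       (subst sum.swap, simp add: mult.commute mult.left_commute)
  have E_fixed: "Q *v e = e" if "e \<in> E" for e
  proof -
    have "(\<Sum>e'\<in>E. (e' \<bullet> e) *\<^sub>R e') = (\<Sum>e'\<in>E. if e' = e then e else 0)"
      using orth unit that by (intro sum.cong) (auto simp: pairwise_def orthogonal_def norm_eq_1)
    then show ?thesis using that \<open>finite E\<close> by (simp add: Q_mult)
  qed
  have "Q *v x = x" if "x \<in> span E" for x
    using that
  proof (induct rule: span_induct)
    case base
    show ?case
      by (auto simp: subspace_def matrix_vector_right_distrib matrix_vector_mult_scaleR)
  qed (use E_fixed in simp)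
  moreover have "transpose Q = Q"
    unfolding Q_def by (simp add: transpose_def vec_eq_iff mult.commute)
  moreover have "Q *v x \<in> N" for x
    unfolding Q_mult span_E[symmetric] by (intro span_sum span_mul span_base) auto
  ultimately show thesis
    using that span_E by simp
qed

lemma penrose_matrix_inv_plus_projection:
  fixes A Q :: "real^'n^'n"
  assumes Q_sym: "transpose Q = Q" and AQ: "A ** Q = 0" and QA: "Q ** A = 0" and QQ: "Q ** Q = Q"
    and "invertible (A + Q)"
  shows "penrose A (matrix_inv (A + Q) - Q)"
proof -
  define C where "C = A + Q"
  define G where "G = matrix_inv C - Q"
  have "Q ** C = Q" and "C ** Q = Q"
    by (simp_all add: C_def matrix_add_ldistrib matrix_add_rdistrib AQ QA QQ)
  then have Q_Cinv: "Q ** matrix_inv C = Q" and Cinv_Q: "matrix_inv C ** Q = Q"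
    using \<open>invertible (A + Q)\<close> unfolding C_def[symmetric]
    by (metis matrix_inv_right matrix_inv_left matrix_mul_assoc matrix_mul_rid matrix_mul_lid)+
  have A_eq: "A = C - Q" by (simp add: C_def)
  have AG: "A ** G = mat 1 - Q"
    using \<open>invertible (A + Q)\<close> unfolding C_def[symmetric]
    by (simp add: G_def matrix_diff_ldistrib AQ)
       (simp add: A_eq matrix_diff_rdistrib matrix_inv_right Q_Cinv)
  have GA: "G ** A = mat 1 - Q"
    using \<open>invertible (A + Q)\<close> unfolding C_def[symmetric]
    by (simp add: G_def matrix_diff_rdistrib QA)
       (simp add: A_eq matrix_diff_ldistrib matrix_inv_left Cinv_Q)
  have "penrose A G"
    unfolding penrose_def
  proof (intro conjI)
    show "A ** G ** A = A" by (simp add: AG matrix_diff_rdistrib QA)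
    show "G ** A ** G = G"
      by (simp only: GA) (simp add: matrix_diff_rdistrib G_def matrix_diff_ldistrib Q_Cinv QQ)
    show "transpose (A ** G) = A ** G" by (simp add: AG transpose_diff Q_sym)
    show "transpose (G ** A) = G ** A" by (simp add: GA transpose_diff Q_sym)
  qed
  then show ?thesis by (simp add: G_def C_def)
qed

text \<open>For the Gram matrix \<open>A = X X\<^sup>T\<close>, take \<open>Q\<close> the orthogonal projection onto the kernel of \<open>A\<close>:
  then \<open>A + Q\<close> is positive definite.\<close>

lemma penrose_gram_exists:
  fixes X :: "real^'p^'n"
  shows "\<exists>B. penrose (X ** transpose X) B"
proof -
  define A where "A = X ** transpose X"
  have A_sym: "transpose A = A" unfolding A_def by (simp add: matrix_transpose_mul)
  have A_quad: "x \<bullet> (A *v x) = (transpose X *v x) \<bullet> (transpose X *v x)" for x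
    unfolding A_def by (simp add: inner_matrix_vector_mult flip: matrix_vector_mul_assoc)
  define N where "N = {x. A *v x = 0}"
  have "subspace N" unfolding N_def subspace_def
    by (auto simp: matrix_vector_right_distrib matrix_vector_mult_scaleR)
  then obtain Q where Q_sym: "transpose Q = Q" and Q_N: "\<And>x. Q *v x \<in> N"
    and Q_id: "\<And>x. x \<in> N \<Longrightarrow> Q *v x = x"
    using orthogonal_projection_matrix_exists by blast
  have AQ: "A ** Q = 0"
    unfolding matrix_eq using Q_N by (simp add: N_def flip: matrix_vector_mul_assoc)
  have QA: "Q ** A = 0"
    by (metis AQ A_sym Q_sym matrix_transpose_mul transpose_zero)
  have QQ: "Q ** Q = Q"
    unfolding matrix_eq using Q_N Q_id by (simp flip: matrix_vector_mul_assoc)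
  have "x = 0" if "(A + Q) *v x = 0" for x
  proof -
    have Q_quad: "x \<bullet> (Q *v x) = (Q *v x) \<bullet> (Q *v x)"
      using inner_symmetric_matrix_vector_mult[OF Q_sym, of x "Q *v x"]
      by (simp add: matrix_vector_mul_assoc QQ)
    have "x \<bullet> ((A + Q) *v x) = 0" using that by simp
    then have "x \<bullet> (A *v x) + x \<bullet> (Q *v x) = 0"
      by (simp add: matrix_vector_mult_add_rdistrib inner_add_right)
    then have "transpose X *v x = 0" and "Q *v x = 0"
      unfolding A_quad Q_quad by (simp_all add: add_nonneg_eq_0_iff)
    moreover have "x \<in> N"
      using \<open>transpose X *v x = 0\<close> by (simp add: N_def A_def flip: matrix_vector_mul_assoc)
    ultimately show "x = 0" using Q_id by metis
  qed
  then have "invertible (A + Q)"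
    by (simp add: invertible_left_inverse matrix_left_invertible_ker)
  with Q_sym AQ QA QQ show ?thesis
    unfolding A_def by (blast intro: penrose_matrix_inv_plus_projection)
qed

lemma penrose_pinv_gram:
  fixes X :: "real^'p^'n"
  shows "penrose (X ** transpose X) (pinv (X ** transpose X))"
proof -
  obtain B where B: "penrose (X ** transpose X) B" using penrose_gram_exists by blast
  then have "pinv (X ** transpose X) = B"
    unfolding pinv_def penrose_def[symmetric] by (metis penrose_unique the_equality)
  then show ?thesis using B by simp
qed

lemma gram_pinv_mult_cancel:
  fixes X :: "real^'p^'n"
  shows "X ** transpose X ** pinv (X ** transpose X) ** X = X"
proof -
  let ?P = "X ** transpose X ** pinv (X ** transpose X)"
  have "?P ** (X ** transpose X) = X ** transpose X" and "transpose ?P = ?P"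
    using penrose_pinv_gram[of X] by (auto simp: penrose_def)
  then have "(X - ?P ** X) ** transpose (X - ?P ** X) = 0"
    by (simp add: transpose_diff matrix_transpose_mul matrix_diff_ldistrib matrix_diff_rdistrib
        matrix_mul_assoc)
  then show ?thesis using matrix_mul_transpose_eq_0 by fastforce
qed

lemma theta0_eq: "theta0 X \<beta>0 = transpose X *v (pinv (X ** transpose X) *v (X *v \<beta>0))"
  by (simp add: theta0_def proj_X_def matrix_vector_mul_assoc matrix_mul_assoc)

lemma mult_theta0: "X *v theta0 X \<beta>0 = X *v \<beta>0"
  unfolding theta0_eq by (simp add: matrix_vector_mul_assoc matrix_mul_assoc gram_pinv_mult_cancel)

lemma finite_eigenvalues_symmetric:
  fixes S :: "real^'n^'n"
  assumes "transpose S = S"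
  shows "finite {\<mu>. is_eigenvalue S \<mu>}"
proof -
  let ?Ev = "{\<mu>. is_eigenvalue S \<mu>}"
  define v where "v \<mu> = (SOME v. v \<noteq> 0 \<and> S *v v = \<mu> *\<^sub>R v)" for \<mu>
  have v: "v \<mu> \<noteq> 0 \<and> S *v v \<mu> = \<mu> *\<^sub>R v \<mu>" if "\<mu> \<in> ?Ev" for \<mu>
  proof -
    from that obtain w where "w \<noteq> 0 \<and> S *v w = \<mu> *\<^sub>R w" unfolding is_eigenvalue_def by auto
    then show ?thesis unfolding v_def by (rule someI)
  qed
  have "inj_on v ?Ev"
  proof (rule inj_onI)
    fix a b assume "a \<in> ?Ev" "b \<in> ?Ev" "v a = v b"
    then have "a *\<^sub>R v a = b *\<^sub>R v a" using v by metis
    then show "a = b" using v \<open>a \<in> ?Ev\<close> by (simp add: scaleR_cancel_right)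
  qed
  moreover have "v a \<bullet> v b = 0" if a: "a \<in> ?Ev" and b: "b \<in> ?Ev" and "a \<noteq> b" for a b
  proof -
    have "a * (v a \<bullet> v b) = (S *v v a) \<bullet> v b" using v[OF a] by simp
    also have "\<dots> = v a \<bullet> (S *v v b)" using inner_symmetric_matrix_vector_mult[OF assms] by simp
    also have "\<dots> = b * (v a \<bullet> v b)" using v[OF b] by simp
    finally show ?thesis using \<open>a \<noteq> b\<close> by simp
  qed
  then have "pairwise orthogonal (v ` ?Ev)"
    by (auto simp: pairwise_def orthogonal_def)
  moreover have "0 \<notin> v ` ?Ev" using v by auto
  ultimately have "independent (v ` ?Ev)" by (intro pairwise_orthogonal_independent)
  then show ?thesis
    using \<open>inj_on v ?Ev\<close> independent_imp_finite finite_imageD by blast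
qed

lemma linear_coeff_eq_0_if_quadratic_nonneg:
  fixes a b :: real
  assumes "\<And>t. a * t + b * t\<^sup>2 \<ge> 0"
  shows "a = 0"
proof -
  define d where "d = \<bar>b\<bar> + 1"
  have "d > 0" and "b < d" unfolding d_def by auto
  have "a * (-a/d) + b * (-a/d)\<^sup>2 \<ge> 0" by (rule assms)
  then have "(a * (-a/d) + b * (-a/d)\<^sup>2) * d\<^sup>2 \<ge> 0" by simp
  also have "(a * (-a/d) + b * (-a/d)\<^sup>2) * d\<^sup>2 = a\<^sup>2 * (b - d)"
    using \<open>d > 0\<close> by (simp add: field_simps power2_eq_square)
  finally show ?thesis using \<open>b < d\<close> by (simp add: zero_le_mult_iff)
qed

lemma rayleigh_minimiser_exists:
  fixes S :: "real^'n^'n"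
  assumes "subspace R" and "u \<in> R" and "u \<noteq> 0"
  obtains v where "v \<in> R" and "norm v = 1"
    and "\<And>y. y \<in> R \<Longrightarrow> (v \<bullet> (S *v v)) * (y \<bullet> y) \<le> y \<bullet> (S *v y)"
proof -
  define f where "f x = x \<bullet> (S *v x)" for x
  define K where "K = R \<inter> sphere 0 1"
  have "compact K"
    unfolding K_def using closed_subspace[OF \<open>subspace R\<close>] compact_sphere by blast
  moreover have "(1 / norm u) *\<^sub>R u \<in> K"
    unfolding K_def using assms by (simp add: subspace_scale)
  moreover have "continuous_on K f"
    unfolding f_def by (intro continuous_intros linear_continuous_on matrix_vector_mul_bounded_linear)
  ultimately obtain v where "v \<in> K" and v_min: "\<And>y. y \<in> K \<Longrightarrow> f v \<le> f y"
    using continuous_attains_inf by (metis empty_iff)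
  have f_scale: "f (a *\<^sub>R x) = a\<^sup>2 * f x" for a x
    by (simp add: f_def matrix_vector_mult_scaleR power2_eq_square)
  have "f v * (y \<bullet> y) \<le> f y" if "y \<in> R" for y
  proof (cases "y = 0")
    case False
    have "(1 / norm y) *\<^sub>R y \<in> K" unfolding K_def using that False \<open>subspace R\<close>
      by (simp add: subspace_scale)
    then have "f v \<le> (1 / norm y)\<^sup>2 * f y"
      using v_min f_scale by metis
    then show ?thesis using False by (simp add: field_simps power2_norm_eq_inner[symmetric])
  qed (simp add: f_def)
  moreover have "v \<in> R" and "norm v = 1" using \<open>v \<in> K\<close> K_def by auto
  ultimately show thesis using that unfolding f_def by blast
qed

text \<open>A minimiser \<open>v\<close> of the Rayleigh quotient on an invariant subspace is an eigenvector:
  for \<open>w = S v - c v\<close>, orthogonal to \<open>v\<close>, the linear term of \<open>t \<mapsto> R(v + t w)\<close> must vanish.\<close>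

lemma eigenvector_if_rayleigh_minimiser:
  fixes S :: "real^'n^'n"
  assumes S_sym: "transpose S = S" and "subspace R" and invariant: "\<And>x. x \<in> R \<Longrightarrow> S *v x \<in> R"
    and "v \<in> R" and "norm v = 1"
    and min: "\<And>y. y \<in> R \<Longrightarrow> (v \<bullet> (S *v v)) * (y \<bullet> y) \<le> y \<bullet> (S *v y)"
  shows "S *v v = (v \<bullet> (S *v v)) *\<^sub>R v"
proof -
  define c where "c = v \<bullet> (S *v v)"
  define w where "w = S *v v - c *\<^sub>R v"
  have vv: "v \<bullet> v = 1" using \<open>norm v = 1\<close> by (simp add: norm_eq_1)
  have "w \<in> R" unfolding w_def using invariant \<open>v \<in> R\<close> \<open>subspace R\<close>
    by (simp add: subspace_diff subspace_scale)
  have "v \<bullet> w = 0"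
    unfolding w_def c_def using vv by (simp add: inner_diff_right)
  then have wv: "w \<bullet> v = 0" by (simp add: inner_commute)
  have "(2 * (w \<bullet> (S *v v))) * t + (w \<bullet> (S *v w) - c * (w \<bullet> w)) * t\<^sup>2 \<ge> 0" for t
  proof -
    have "v + t *\<^sub>R w \<in> R" using \<open>v \<in> R\<close> \<open>w \<in> R\<close> \<open>subspace R\<close>
      by (simp add: subspace_add subspace_scale)
    from min[OF this] show ?thesis
      using inner_symmetric_matrix_vector_mult[OF S_sym, of v w] wv vv
      by (simp add: c_def matrix_vector_right_distrib matrix_vector_mult_scaleR
          inner_add_left inner_add_right inner_commute power2_eq_square algebra_simps)
  qed
  then have "w \<bullet> (S *v v) = 0" using linear_coeff_eq_0_if_quadratic_nonneg by fastforce
  moreover have "w \<bullet> w = w \<bullet> (S *v v) - c * (w \<bullet> v)"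
    unfolding w_def by (simp add: inner_diff_right)
  ultimately have "w = 0" using wv by simp
  then show ?thesis by (simp add: w_def c_def)
qed

lemma symmetric_Sigma_hat: "transpose (Sigma_hat X) = Sigma_hat X"
  by (simp add: Sigma_hat_def transpose_scalar matrix_transpose_mul)

lemma Sigma_hat_mult:
  fixes X :: "real^'p^'n"
  shows "Sigma_hat X *v x = transpose X *v ((1 / real CARD('n)) *\<^sub>R (X *v x))"
  by (simp add: Sigma_hat_def matrix_vector_mult_scaleR matrix_vector_mul_assoc
      flip: scaleR_matrix_vector_assoc)

lemma inner_Sigma_hat:
  fixes X :: "real^'p^'n"
  shows "x \<bullet> (Sigma_hat X *v x) = (X *v x) \<bullet> (X *v x) / real CARD('n)"
  using inner_matrix_vector_mult[of x "transpose X"] by (simp add: Sigma_hat_mult)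

lemma eigenvalue_Sigma_hat_nonneg:
  assumes "is_eigenvalue (Sigma_hat X) \<mu>"
  shows "\<mu> \<ge> 0"
proof -
  obtain w where "w \<noteq> 0" and "Sigma_hat X *v w = \<mu> *\<^sub>R w"
    using assms unfolding is_eigenvalue_def by auto
  then have "\<mu> * (w \<bullet> w) \<ge> 0" and "w \<bullet> w > 0"
    using inner_Sigma_hat[where X=X and x=w] by simp_all
  then show ?thesis by (simp add: zero_le_mult_iff)
qed

lemma rayleigh_Sigma_hat_row_space:
  fixes X :: "real^'p^'n"
  assumes "u \<in> range ((*v) (transpose X))" and "u \<noteq> 0"
  obtains c where "c \<noteq> 0" and "is_eigenvalue (Sigma_hat X) c"
    and "c * (u \<bullet> u) \<le> u \<bullet> (Sigma_hat X *v u)"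
proof -
  let ?S = "Sigma_hat X" and ?R = "range ((*v) (transpose X))"
  have "subspace ?R"
    by (intro real_vector.linear_subspace_image subspace_UNIV matrix_vector_mul_linear)
  moreover have invariant: "?S *v x \<in> ?R" for x unfolding Sigma_hat_mult by (rule rangeI)
  ultimately obtain v where "v \<in> ?R" and "norm v = 1"
    and min: "\<And>y. y \<in> ?R \<Longrightarrow> (v \<bullet> (?S *v v)) * (y \<bullet> y) \<le> y \<bullet> (?S *v y)"
    using rayleigh_minimiser_exists assms by blast
  define c where "c = v \<bullet> (?S *v v)"
  have eig: "?S *v v = c *\<^sub>R v"
    unfolding c_def
    by (rule eigenvector_if_rayleigh_minimiser[OF symmetric_Sigma_hat \<open>subspace ?R\<close> invariant
          \<open>v \<in> ?R\<close> \<open>norm v = 1\<close> min])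
  have "c \<noteq> 0"
  proof
    assume "c = 0"
    then have "X *v v = 0" using eig inner_Sigma_hat[where X=X and x=v] by simp
    moreover obtain z where "v = transpose X *v z" using \<open>v \<in> ?R\<close> by auto
    moreover have "z \<bullet> (X *v v) = v \<bullet> v"
      using inner_matrix_vector_mult[of z X v] \<open>v = transpose X *v z\<close> by simp
    ultimately have "v \<bullet> v = 0" by simp
    then show False using \<open>norm v = 1\<close> by simp
  qed
  moreover have "is_eigenvalue ?S c"
    unfolding is_eigenvalue_def using eig \<open>norm v = 1\<close> by (intro exI[of _ v]) auto
  moreover have "c * (u \<bullet> u) \<le> u \<bullet> (?S *v u)"
    using min[OF assms(1)] by (simp add: c_def)
  ultimately show thesis by (rule that)
qed

lemma lambda_min_nz_Sigma_hat:
  fixes X :: "real^'p^'n"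
  assumes "u \<in> range ((*v) (transpose X))" and "u \<noteq> 0"
  shows "lambda_min_nz (Sigma_hat X) > 0"
    and "lambda_min_nz (Sigma_hat X) * (u \<bullet> u) \<le> u \<bullet> (Sigma_hat X *v u)"
proof -
  let ?S = "Sigma_hat X"
  let ?Ev = "{\<mu>. \<mu> \<noteq> 0 \<and> is_eigenvalue ?S \<mu>}"
  obtain c where "c \<in> ?Ev" and rayleigh: "c * (u \<bullet> u) \<le> u \<bullet> (?S *v u)"
    using rayleigh_Sigma_hat_row_space[OF assms] by blast
  moreover have "finite ?Ev"
    using finite_eigenvalues_symmetric[OF symmetric_Sigma_hat] by (rule rev_finite_subset) auto
  ultimately have in_Ev: "lambda_min_nz ?S \<in> ?Ev" and le_c: "lambda_min_nz ?S \<le> c"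
    unfolding lambda_min_nz_def by (intro Min_in Min_le; blast)+
  then show "lambda_min_nz ?S > 0"
    using eigenvalue_Sigma_hat_nonneg[of X "lambda_min_nz ?S"] by (simp add: less_le)
  have "lambda_min_nz ?S * (u \<bullet> u) \<le> c * (u \<bullet> u)"
    using le_c by (simp add: mult_right_mono)
  also have "\<dots> \<le> u \<bullet> (?S *v u)" by (rule rayleigh)
  finally show "lambda_min_nz ?S * (u \<bullet> u) \<le> u \<bullet> (?S *v u)" .
qed

lemma invertible_Sigma_hat_plus_scaled_id:
  fixes X :: "real^'p^'n"
  assumes "lam > 0"
  shows "invertible (Sigma_hat X + lam *\<^sub>R mat 1)"
proof -
  have "x = 0" if "(Sigma_hat X + lam *\<^sub>R mat 1) *v x = 0" for x
  proof -
    have "x \<bullet> ((Sigma_hat X + lam *\<^sub>R mat 1) *v x) = 0" using that by simp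
    then have "(X *v x) \<bullet> (X *v x) / real CARD('n) + lam * (x \<bullet> x) = 0"
      by (simp add: matrix_vector_mult_add_rdistrib inner_add_right inner_Sigma_hat
          flip: scaleR_matrix_vector_assoc)
    moreover have "(X *v x) \<bullet> (X *v x) / real CARD('n) \<ge> 0" by simp
    ultimately have "lam * (x \<bullet> x) \<le> 0" by linarith
    then have "x \<bullet> x \<le> 0" using assms by (simp add: mult_le_0_iff)
    then show "x = 0" by (metis inner_ge_zero inner_eq_zero_iff order_antisym)
  qed
  then show ?thesis by (simp add: invertible_left_inverse matrix_left_invertible_ker)
qed

lemma symmetric_matrix_inv_Sigma_hat_plus_scaled_id:
  fixes X :: "real^'p^'n"
  assumes "lam > 0"
  shows "transpose (matrix_inv (Sigma_hat X + lam *\<^sub>R mat 1))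
           = matrix_inv (Sigma_hat X + lam *\<^sub>R mat 1)"
  using assms
  by (simp add: transpose_matrix_inv_symmetric invertible_Sigma_hat_plus_scaled_id transpose_add
      transpose_scalar symmetric_Sigma_hat)

definition ridge_matrix :: "real^'p^'n \<Rightarrow> real \<Rightarrow> real^'n^'p" where
  "ridge_matrix X lam =
     matrix_inv (Sigma_hat X + lam *\<^sub>R mat 1) ** ((1 / real CARD('n)) *\<^sub>R transpose X)"

lemma ridge_eq_ridge_matrix: "ridge X lam Y = ridge_matrix X lam *v Y"
  unfolding ridge_def ridge_matrix_def
  by (simp only: scaleR_matrix_vector_assoc flip: matrix_vector_mul_assoc)

lemma ridge_matrix_mult_transpose:
  fixes X :: "real^'p^'n"
  assumes "lam > 0"
  shows "ridge_matrix X lam ** transpose (ridge_matrix X lam) = (1 / real CARD('n)) *\<^sub>R Omega X lam"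
  using symmetric_matrix_inv_Sigma_hat_plus_scaled_id[OF assms, of X]
  by (simp add: ridge_matrix_def Omega_def Sigma_hat_def matrix_transpose_mul transpose_scalar
      matrix_scalar_ac matrix_mul_assoc flip: scalar_matrix_assoc)

lemma ridge_matrix_mult_noiseless:
  fixes X :: "real^'p^'n"
  assumes "lam > 0"
  shows "ridge_matrix X lam *v (X *v \<beta>0) =
           theta0 X \<beta>0 - lam *\<^sub>R (matrix_inv (Sigma_hat X + lam *\<^sub>R mat 1) *v theta0 X \<beta>0)"
proof -
  let ?A = "Sigma_hat X + lam *\<^sub>R mat 1" and ?\<theta> = "theta0 X \<beta>0"
  have "ridge_matrix X lam *v (X *v \<beta>0) = matrix_inv ?A *v (Sigma_hat X *v ?\<theta>)"
    by (simp add: ridge_matrix_def Sigma_hat_mult mult_theta0 matrix_vector_mult_scaleR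
        flip: matrix_vector_mul_assoc scaleR_matrix_vector_assoc)
  also have "Sigma_hat X *v ?\<theta> = ?A *v ?\<theta> - lam *\<^sub>R ?\<theta>"
    by (simp add: matrix_vector_mult_add_rdistrib flip: scaleR_matrix_vector_assoc)
  finally show ?thesis
    by (simp add: matrix_vector_mult_diff_distrib matrix_vector_mult_scaleR matrix_vector_mul_assoc
        matrix_inv_left[OF invertible_Sigma_hat_plus_scaled_id[OF assms]])
qed

lemma theta0_in_row_space: "theta0 X \<beta>0 \<in> range ((*v) (transpose X))"
  unfolding theta0_eq by (rule rangeI)

text \<open>\<open>(\<Sigma> + \<lambda>I)\<^sup>-\<^sup>1\<close> preserves the row space of \<open>X\<close>, on which \<open>\<Sigma>\<close> is bounded below by its smallest
  nonzero eigenvalue.\<close>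

lemma norm_resolvent_row_space_le:
  fixes X :: "real^'p^'n"
  assumes "lam > 0" and \<theta>: "\<theta> \<in> range ((*v) (transpose X))"
  shows "norm (matrix_inv (Sigma_hat X + lam *\<^sub>R mat 1) *v \<theta>)
           \<le> norm \<theta> * inverse (lambda_min_nz (Sigma_hat X))"
proof -
  let ?S = "Sigma_hat X" and ?R = "range ((*v) (transpose X))"
  define u where "u = matrix_inv (?S + lam *\<^sub>R mat 1) *v \<theta>"
  have "(?S + lam *\<^sub>R mat 1) *v u = \<theta>"
    by (simp add: u_def matrix_vector_mul_assoc
        matrix_inv_right[OF invertible_Sigma_hat_plus_scaled_id[OF assms(1)]])
  then have Au: "?S *v u + lam *\<^sub>R u = \<theta>"
    by (simp add: matrix_vector_mult_add_rdistrib flip: scaleR_matrix_vector_assoc)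
  \<comment> \<open>If \<open>u = 0\<close> then \<open>\<theta> = 0\<close>, so the unspecified value of \<open>lambda_min_nz\<close> when \<open>X = 0\<close> is harmless.\<close>
  show ?thesis
  proof (cases "u = 0")
    case False
    have "subspace ?R"
      by (intro real_vector.linear_subspace_image subspace_UNIV matrix_vector_mul_linear)
    moreover have "?S *v u \<in> ?R" unfolding Sigma_hat_mult by (rule rangeI)
    ultimately have "(1 / lam) *\<^sub>R (\<theta> - ?S *v u) \<in> ?R"
      using \<theta> by (simp add: subspace_diff subspace_scale)
    moreover have "(1 / lam) *\<^sub>R (\<theta> - ?S *v u) = u"
      using assms(1) by (simp flip: Au)
    ultimately have "u \<in> ?R" by simp
    note \<mu> = lambda_min_nz_Sigma_hat[OF this False]
    have "lambda_min_nz ?S * (norm u * norm u) \<le> u \<bullet> (?S *v u)"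
      using \<mu>(2) by (simp add: power2_norm_eq_inner[symmetric] power2_eq_square)
    also have "\<dots> \<le> u \<bullet> \<theta>"
      using assms(1) by (simp add: Au[symmetric] inner_add_right)
    also have "\<dots> \<le> norm u * norm \<theta>" by (rule norm_cauchy_schwarz)
    finally have "lambda_min_nz ?S * norm u \<le> norm \<theta>"
      using False by (simp add: mult.left_commute)
    then show ?thesis
      using \<mu>(1) by (simp add: u_def field_simps)
  qed (use Au in \<open>simp add: u_def\<close>)
qed

lemma ridge_bias_le:
  fixes X :: "real^'p^'n"
  assumes "lam > 0"
  shows "\<bar>(ridge_matrix X lam *v (X *v \<beta>0)) $ j - theta0 X \<beta>0 $ j\<bar>
           \<le> lam * norm (theta0 X \<beta>0) * inverse (lambda_min_nz (Sigma_hat X))"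
proof -
  let ?u = "matrix_inv (Sigma_hat X + lam *\<^sub>R mat 1) *v theta0 X \<beta>0"
  have "\<bar>(ridge_matrix X lam *v (X *v \<beta>0)) $ j - theta0 X \<beta>0 $ j\<bar> = lam * \<bar>?u $ j\<bar>"
    using assms by (simp add: ridge_matrix_mult_noiseless abs_mult)
  also have "\<dots> \<le> lam * norm ?u"
    using assms by (simp add: component_le_norm_cart)
  also have "\<dots> \<le> lam * (norm (theta0 X \<beta>0) * inverse (lambda_min_nz (Sigma_hat X)))"
    using assms norm_resolvent_row_space_le[OF assms theta0_in_row_space] by simp
  finally show ?thesis by (simp add: mult.assoc)
qed

lemma (in prob_space) integral_square_lincomb_indep:
  fixes \<xi> :: "'i \<Rightarrow> 'a \<Rightarrow> real"
  assumes "finite I" and indep: "indep_vars (\<lambda>_. borel) \<xi> I"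
    and int: "\<And>i. i \<in> I \<Longrightarrow> integrable M (\<xi> i)"
    and sq_int: "\<And>i. i \<in> I \<Longrightarrow> integrable M (\<lambda>\<omega>. (\<xi> i \<omega>)\<^sup>2)"
    and mean0: "\<And>i. i \<in> I \<Longrightarrow> (\<integral>\<omega>. \<xi> i \<omega> \<partial>M) = 0"
    and var: "\<And>i. i \<in> I \<Longrightarrow> (\<integral>\<omega>. (\<xi> i \<omega>)\<^sup>2 \<partial>M) = \<sigma>\<^sup>2"
  shows "(\<integral>\<omega>. (\<Sum>i\<in>I. a i * \<xi> i \<omega>)\<^sup>2 \<partial>M) = \<sigma>\<^sup>2 * (\<Sum>i\<in>I. (a i)\<^sup>2)"
proof -
  have cross: "integrable M (\<lambda>\<omega>. \<xi> i \<omega> * \<xi> k \<omega>) \<and>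
      (\<integral>\<omega>. \<xi> i \<omega> * \<xi> k \<omega> \<partial>M) = (if i = k then \<sigma>\<^sup>2 else 0)" if "i \<in> I" "k \<in> I" for i k
  proof (cases "i = k")
    case True
    then show ?thesis using sq_int var that by (simp add: power2_eq_square)
  next
    case False
    have indep2: "indep_vars (\<lambda>_. borel) \<xi> {i, k}"
      by (rule indep_vars_subset[OF indep]) (use that in auto)
    have prod: "(\<Prod>l\<in>{i, k}. \<xi> l \<omega>) = \<xi> i \<omega> * \<xi> k \<omega>" for \<omega> using False by simp
    have "integrable M (\<lambda>\<omega>. \<Prod>l\<in>{i, k}. \<xi> l \<omega>)"
      by (rule indep_vars_integrable) (use indep2 int that in auto)
    moreover have "(\<integral>\<omega>. (\<Prod>l\<in>{i, k}. \<xi> l \<omega>) \<partial>M) = (\<Prod>l\<in>{i, k}. \<integral>\<omega>. \<xi> l \<omega> \<partial>M)"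
      by (rule indep_vars_lebesgue_integral) (use indep2 int that in auto)
    ultimately show ?thesis using False mean0 that by (simp add: prod)
  qed
  have "(\<lambda>\<omega>. (\<Sum>i\<in>I. a i * \<xi> i \<omega>)\<^sup>2) = (\<lambda>\<omega>. \<Sum>i\<in>I. \<Sum>k\<in>I. (a i * a k) * (\<xi> i \<omega> * \<xi> k \<omega>))"
    by (simp add: power2_eq_square sum_product mult_ac)
  then have "(\<integral>\<omega>. (\<Sum>i\<in>I. a i * \<xi> i \<omega>)\<^sup>2 \<partial>M) =
      (\<Sum>i\<in>I. \<Sum>k\<in>I. (a i * a k) * (\<integral>\<omega>. \<xi> i \<omega> * \<xi> k \<omega> \<partial>M))"
    using cross by (simp add: integral_sum integrable_sum)
  also have "\<dots> = (\<Sum>i\<in>I. \<Sum>k\<in>I. if i = k then a i * a k * \<sigma>\<^sup>2 else 0)"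
    using cross by (intro sum.cong) auto
  also have "\<dots> = \<sigma>\<^sup>2 * (\<Sum>i\<in>I. (a i)\<^sup>2)"
    using \<open>finite I\<close> by (simp add: sum_distrib_left power2_eq_square mult_ac)
  finally show ?thesis .
qed

context prob_space
begin

context
  fixes \<epsilon> :: "'a \<Rightarrow> real^'n"
  assumes int: "\<And>i. integrable M (\<lambda>\<omega>. \<epsilon> \<omega> $ i)"
    and mean0: "\<And>i. (\<integral>\<omega>. \<epsilon> \<omega> $ i \<partial>M) = 0"
begin

lemma integral_matrix_vector_mult_noise:
  "(\<integral>\<omega>. (K *v (b + \<epsilon> \<omega>)) $ j \<partial>M) = (K *v b) $ j"
  using int mean0
  by (simp add: matrix_vector_right_distrib matrix_vector_mult_def integral_add integrable_sum
      integral_sum prob_space)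

lemma variance_matrix_vector_mult_noise:
  assumes "indep_vars (\<lambda>_. borel) (\<lambda>i \<omega>. \<epsilon> \<omega> $ i) UNIV"
    and "\<And>i. integrable M (\<lambda>\<omega>. (\<epsilon> \<omega> $ i)\<^sup>2)"
    and "\<And>i. (\<integral>\<omega>. (\<epsilon> \<omega> $ i)\<^sup>2 \<partial>M) = \<sigma>\<^sup>2"
  shows "(\<integral>\<omega>. ((K *v (b + \<epsilon> \<omega>)) $ j - (\<integral>\<omega>'. (K *v (b + \<epsilon> \<omega>')) $ j \<partial>M))\<^sup>2 \<partial>M)
           = \<sigma>\<^sup>2 * (K ** transpose K) $ j $ j"
proof -
  have "(\<integral>\<omega>. ((K *v (b + \<epsilon> \<omega>)) $ j - (\<integral>\<omega>'. (K *v (b + \<epsilon> \<omega>')) $ j \<partial>M))\<^sup>2 \<partial>M)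
      = (\<integral>\<omega>. (\<Sum>i\<in>UNIV. K $ j $ i * \<epsilon> \<omega> $ i)\<^sup>2 \<partial>M)"
    by (simp only: integral_matrix_vector_mult_noise)
       (simp add: matrix_vector_mult_def distrib_left sum.distrib)
  also have "\<dots> = \<sigma>\<^sup>2 * (\<Sum>i\<in>UNIV. (K $ j $ i)\<^sup>2)"
    by (rule integral_square_lincomb_indep) (use assms int mean0 in auto)
  also have "(\<Sum>i\<in>UNIV. (K $ j $ i)\<^sup>2) = (K ** transpose K) $ j $ j"
    by (simp add: matrix_matrix_mult_def transpose_def power2_eq_square)
  finally show ?thesis .
qed

end

end

theorem proposition1:
  fixes M :: "'a measure"
    and X :: "real^'p^'n"
    and \<beta>0 :: "real^'p"
    and \<epsilon> :: "'a \<Rightarrow> real^'n"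
    and \<sigma> lam :: real
  assumes "prob_space M"
    and meas: "\<And>i. (\<lambda>\<omega>. \<epsilon> \<omega> $ i) \<in> borel_measurable M"
    and indep: "prob_space.indep_vars M (\<lambda>_. borel) (\<lambda>i \<omega>. \<epsilon> \<omega> $ i) UNIV"
    and ident: "\<And>i j. distr M borel (\<lambda>\<omega>. \<epsilon> \<omega> $ i) = distr M borel (\<lambda>\<omega>. \<epsilon> \<omega> $ j)"
    and sq_int: "\<And>i. integrable M (\<lambda>\<omega>. (\<epsilon> \<omega> $ i)\<^sup>2)"
    and mean0: "\<And>i. (\<integral>\<omega>. \<epsilon> \<omega> $ i \<partial>M) = 0"
    and var: "\<And>i. (\<integral>\<omega>. (\<epsilon> \<omega> $ i - (\<integral>\<omega>'. \<epsilon> \<omega>' $ i \<partial>M))\<^sup>2 \<partial>M) = \<sigma>\<^sup>2"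
    and "lam > 0"
    and "Omega_min X lam > 0"
  defines "Y \<equiv> (\<lambda>\<omega>. X *v \<beta>0 + \<epsilon> \<omega>)"
  defines "\<beta>hat \<equiv> (\<lambda>\<omega>. ridge X lam (Y \<omega>))"
  shows "Max (range (\<lambda>j. \<bar>(\<integral>\<omega>. \<beta>hat \<omega> $ j \<partial>M) - theta0 X \<beta>0 $ j\<bar>))
           \<le> lam * norm (theta0 X \<beta>0) * inverse (lambda_min_nz (Sigma_hat X))
         \<and> Min (range (\<lambda>j. (\<integral>\<omega>. (\<beta>hat \<omega> $ j - (\<integral>\<omega>'. \<beta>hat \<omega>' $ j \<partial>M))\<^sup>2 \<partial>M)))
           \<ge> \<sigma>\<^sup>2 * Omega_min X lam / real CARD('n)"
proof -
  interpret prob_space M by fact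
  have int: "integrable M (\<lambda>\<omega>. \<epsilon> \<omega> $ i)" for i
    by (rule square_integrable_imp_integrable[OF meas sq_int])
  have \<beta>hat_eq: "\<beta>hat = (\<lambda>\<omega>. ridge_matrix X lam *v (X *v \<beta>0 + \<epsilon> \<omega>))"
    by (simp add: \<beta>hat_def Y_def ridge_eq_ridge_matrix)
  have "(\<integral>\<omega>. \<beta>hat \<omega> $ j \<partial>M) = (ridge_matrix X lam *v (X *v \<beta>0)) $ j" for j
    unfolding \<beta>hat_eq by (rule integral_matrix_vector_mult_noise[OF int mean0])
  then have bias: "\<bar>(\<integral>\<omega>. \<beta>hat \<omega> $ j \<partial>M) - theta0 X \<beta>0 $ j\<bar>
      \<le> lam * norm (theta0 X \<beta>0) * inverse (lambda_min_nz (Sigma_hat X))" for j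
    using ridge_bias_le[OF \<open>lam > 0\<close>] by simp
  have "(\<integral>\<omega>. (\<beta>hat \<omega> $ j - (\<integral>\<omega>'. \<beta>hat \<omega>' $ j \<partial>M))\<^sup>2 \<partial>M)
      = \<sigma>\<^sup>2 * (ridge_matrix X lam ** transpose (ridge_matrix X lam)) $ j $ j" for j
    unfolding \<beta>hat_eq
    by (rule variance_matrix_vector_mult_noise[OF int mean0 indep sq_int]) (use var mean0 in simp)
  then have variance: "(\<integral>\<omega>. (\<beta>hat \<omega> $ j - (\<integral>\<omega>'. \<beta>hat \<omega>' $ j \<partial>M))\<^sup>2 \<partial>M)
      = \<sigma>\<^sup>2 * Omega X lam $ j $ j / real CARD('n)" for j
    by (simp add: ridge_matrix_mult_transpose[OF \<open>lam > 0\<close>])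
  have "Omega_min X lam \<le> Omega X lam $ j $ j" for j
    unfolding Omega_min_def by (rule Min_le) auto
  then have "\<sigma>\<^sup>2 * Omega_min X lam / real CARD('n) \<le> \<sigma>\<^sup>2 * Omega X lam $ j $ j / real CARD('n)" for j
    by (simp add: divide_right_mono mult_left_mono)
  then show ?thesis
    using bias variance by (simp add: Max_le_iff Min_ge_iff)
qed

end
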